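(* Let $L>0,\alpha>0$. There exists a constant $F>0$ such that for any $\lambda\ge0$ and any $b\in\Lambda(\alpha)$, the principal eigenfunction $\psi\in E_L$ of $-L_{\lambda,b}$ satisfies $\max\psi/\min\psi\le F$.
   Context: $\Lambda(\alpha)$: $b\in C^1(\mathbb R)$, $b\ge0$, $L$-periodic, $\int_0^Lb=\alpha L$. $E_L$ is the set of positive $L$-periodic functions in $H^1_{loc}(\mathbb R)$. $-L_{\lambda,b}\psi=-\psi''+2\lambda\psi'-b\psi$ on $L$-periodic functions; its principal eigenfunction is a positive $L$-periodic $\psi$ with $-L_{\lambda,b}\psi=\mu(\lambda,b)\psi$ for the principal eigenvalue $\mu(\lambda,b)$. *)

theory Defs
  imports "HOL-Analysis.Analysis"
begin

definition periodic_fun :: "real \<Rightarrow> (real \<Rightarrow> real) \<Rightarrow> bool" where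
  "periodic_fun L f \<longleftrightarrow> (\<forall>x. f (x + L) = f x)"

definition C1_real :: "(real \<Rightarrow> real) \<Rightarrow> bool" where
  "C1_real b \<longleftrightarrow> (\<exists>b'. (\<forall>x. (b has_real_derivative b' x) (at x)) \<and> continuous_on UNIV b')"

definition Lambda_class :: "real \<Rightarrow> real \<Rightarrow> (real \<Rightarrow> real) set" where
  "Lambda_class L \<alpha> = {b. C1_real b \<and> (\<forall>x. b x \<ge> 0) \<and> periodic_fun L b
      \<and> integral {0..L} b = \<alpha> * L}"

text \<open>psi is a positive L-periodic (classical, C^2) solution of
  -psi'' + 2 lambda psi' - b psi = mu psi, i.e. a principal eigenfunction of -L_{lambda,b}
  with principal eigenvalue mu (the principal eigenvalue is the unique eigenvalue
  admitting a positive periodic eigenfunction).\<close>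
definition principal_eigenfunction ::
  "real \<Rightarrow> real \<Rightarrow> (real \<Rightarrow> real) \<Rightarrow> real \<Rightarrow> (real \<Rightarrow> real) \<Rightarrow> bool" where
  "principal_eigenfunction L lam b \<mu> \<psi> \<longleftrightarrow>
     (\<forall>x. \<psi> x > 0) \<and> periodic_fun L \<psi> \<and>
     (\<exists>\<psi>' \<psi>''. (\<forall>x. (\<psi> has_real_derivative \<psi>' x) (at x)) \<and>
                (\<forall>x. (\<psi>' has_real_derivative \<psi>'' x) (at x)) \<and>
                continuous_on UNIV \<psi>'' \<and>
                (\<forall>x. - \<psi>'' x + 2 * lam * \<psi>' x - b x * \<psi> x = \<mu> * \<psi> x))"

end

theory Submission
  imports Defs
begin

text \<open>Integrating the equation over a period kills \<open>\<psi>''\<close> and \<open>\<psi>'\<close>, so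
  \<open>-\<mu> \<integral>\<psi> = \<integral>b\<psi>\<close>; hence \<open>\<mu> \<le> 0\<close> and, with \<open>s = \<surd>(-\<mu>)\<close>,
  \<open>s\<^sup>2 \<integral>\<psi> \<le> max \<psi> \<cdot> \<alpha>L\<close>. At a minimum of the periodic function \<open>\<psi>'/\<psi>\<close> one has
  \<open>\<psi>\<psi>'' = \<psi>'\<^sup>2\<close>, and the equation (with \<open>\<lambda> \<ge> 0\<close>, \<open>b \<ge> 0\<close>) gives \<open>\<psi>'/\<psi> \<ge> -s\<close> everywhere.
  So \<open>\<psi>\<close> decays at most like \<open>e\<^sup>-\<^sup>s\<^sup>t\<close>: this yields \<open>max \<psi> / min \<psi> \<le> e\<^sup>s\<^sup>L\<close>, and also
  \<open>\<integral>\<psi> \<ge> max \<psi> \<cdot> (1 - e\<^sup>-\<^sup>s\<^sup>L)/s\<close>; when \<open>sL > 1\<close> this is at least \<open>max \<psi> / 2s\<close>, and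
  the first bound forces \<open>s \<le> 2\<alpha>L\<close>. Hence \<open>sL \<le> 1 + 2\<alpha>L\<^sup>2\<close> in all cases.\<close>

lemma periodic_fun_add_of_int:
  assumes "periodic_fun L f"
  shows "f (x + of_int n * L) = f x"
proof -
  have nat_shift: "f (y + real k * L) = f y" for y k
  proof (induction k)
    case (Suc k)
    have "f (y + real (Suc k) * L) = f ((y + real k * L) + L)" by (simp add: algebra_simps)
    with Suc assms show ?case unfolding periodic_fun_def by simp
  qed simp
  show ?thesis
  proof (cases "n \<ge> 0")
    case True
    then show ?thesis using nat_shift[of x "nat n"] by simp
  next
    case False
    then show ?thesis using nat_shift[of "x + of_int n * L" "nat (- n)"] by simp
  qed
qed

lemma periodic_fun_range_eq:
  assumes "periodic_fun L f" "L > 0"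
  shows "range f = f ` {a..a+L}"
proof
  show "range f \<subseteq> f ` {a..a+L}"
  proof
    fix y assume "y \<in> range f"
    then obtain x where y: "y = f x" by auto
    define n where "n = \<lfloor>(x - a) / L\<rfloor>"
    have "of_int n \<le> (x - a) / L" "(x - a) / L < of_int n + 1"
      unfolding n_def by linarith+
    then have "of_int n * L \<le> x - a" "x - a < (of_int n + 1) * L"
      using assms(2) by (auto simp: field_simps)
    then have "x + of_int (- n) * L \<in> {a..a+L}" by (auto simp: algebra_simps)
    moreover have "f (x + of_int (- n) * L) = y"
      using periodic_fun_add_of_int[OF assms(1)] y by blast
    ultimately show "y \<in> f ` {a..a+L}" by (metis image_eqI)
  qed
qed auto

lemma periodic_fun_attains_max:
  assumes "periodic_fun L f" "L > 0" "continuous_on UNIV f"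
  shows "\<exists>x\<in>{a..a+L}. \<forall>y. f y \<le> f x"
proof -
  have "continuous_on {a..a+L} f" "{a..a+L} \<noteq> {}"
    using assms(2,3) continuous_on_subset by auto
  then obtain x where "x \<in> {a..a+L}" "\<forall>y\<in>{a..a+L}. f y \<le> f x"
    using continuous_attains_sup[OF compact_Icc] by blast
  moreover have "f y \<in> f ` {a..a+L}" for y
    using periodic_fun_range_eq[OF assms(1,2), of a] by blast
  ultimately show ?thesis by (metis imageE)
qed

lemma periodic_fun_attains_min:
  assumes "periodic_fun L f" "L > 0" "continuous_on UNIV f"
  shows "\<exists>x\<in>{a..a+L}. \<forall>y. f x \<le> f y"
proof -
  have "continuous_on {a..a+L} f" "{a..a+L} \<noteq> {}"
    using assms(2,3) continuous_on_subset by auto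
  then obtain x where "x \<in> {a..a+L}" "\<forall>y\<in>{a..a+L}. f x \<le> f y"
    using continuous_attains_inf[OF compact_Icc] by blast
  moreover have "f y \<in> f ` {a..a+L}" for y
    using periodic_fun_range_eq[OF assms(1,2), of a] by blast
  ultimately show ?thesis by (metis imageE)
qed

lemma continuous_on_UNIV_integrable_on_Icc:
  fixes f :: "real \<Rightarrow> real"
  shows "continuous_on UNIV f \<Longrightarrow> f integrable_on {u..v}"
  using integrable_continuous_real continuous_on_subset by blast

lemma periodic_fun_integral_shift:
  fixes f :: "real \<Rightarrow> real"
  assumes "periodic_fun L f" "continuous_on UNIV f" "a \<in> {0..L}"
  shows "integral {a..a+L} f = integral {0..L} f"
proof -
  have int: "f integrable_on {u..v}" for u v
    using continuous_on_UNIV_integrable_on_Icc[OF assms(2)] .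
  have "f \<circ> (+) L = f" using assms(1) unfolding periodic_fun_def by (auto simp: add.commute)
  then have "integral {L..a+L} f = integral {0..a} f"
    using integral_shift_Icc_real[of 0 a f L] by (simp add: add.commute)
  moreover have "integral {a..a+L} f = integral {a..L} f + integral {L..a+L} f"
    using Henstock_Kurzweil_Integration.integral_combine[of a L "a+L" f] int assms(3) by simp
  moreover have "integral {0..L} f = integral {0..a} f + integral {a..L} f"
    using Henstock_Kurzweil_Integration.integral_combine[of 0 a L f] int assms(3) by simp
  ultimately show ?thesis by simp
qed

lemma periodic_fun_deriv:
  assumes "periodic_fun L f" "\<And>x. (f has_real_derivative f' x) (at x)"
  shows "periodic_fun L f'"
  unfolding periodic_fun_def
proof
  fix x
  have "((\<lambda>x. f (x + L)) has_real_derivative f' (x + L)) (at x)"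
    using assms(2) DERIV_shift by blast
  moreover have "(\<lambda>x. f (x + L)) = f" using assms(1) unfolding periodic_fun_def by auto
  ultimately show "f' (x + L) = f' x" using assms(2) DERIV_unique by metis
qed

lemma periodic_fun_deriv_has_integral_zero:
  assumes "periodic_fun L f" "L \<ge> 0" "\<And>x. (f has_real_derivative f' x) (at x)"
  shows "(f' has_integral 0) {0..L}"
proof -
  have "(f' has_integral (f L - f 0)) {0..L}"
    using assms(2,3) by (intro fundamental_theorem_of_calculus)
      (auto intro: has_field_derivative_at_within
        simp: has_real_derivative_iff_has_vector_derivative[symmetric])
  moreover have "f L = f 0" using assms(1) unfolding periodic_fun_def by (metis add_0)
  ultimately show ?thesis by simp
qed

lemma has_real_derivative_continuous_on:
  "(\<And>x. (f has_real_derivative f' x) (at x)) \<Longrightarrow> continuous_on UNIV f"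
  by (meson DERIV_isCont continuous_at_imp_continuous_on)

locale periodic_eigenfunction =
  fixes L lam \<mu> :: real and b \<psi> \<psi>' \<psi>'' :: "real \<Rightarrow> real"
  assumes period_pos: "L > 0"
    and drift_nonneg: "lam \<ge> 0"
    and b_continuous: "continuous_on UNIV b"
    and b_nonneg: "\<And>x. b x \<ge> 0"
    and \<psi>_pos: "\<And>x. \<psi> x > 0"
    and \<psi>_periodic: "periodic_fun L \<psi>"
    and \<psi>_deriv: "\<And>x. (\<psi> has_real_derivative \<psi>' x) (at x)"
    and \<psi>'_deriv: "\<And>x. (\<psi>' has_real_derivative \<psi>'' x) (at x)"
    and eigen_equation: "\<And>x. - \<psi>'' x + 2 * lam * \<psi>' x - b x * \<psi> x = \<mu> * \<psi> x"
begin

lemma \<psi>_continuous: "continuous_on UNIV \<psi>"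
  using has_real_derivative_continuous_on[OF \<psi>_deriv] .

lemma \<psi>'_periodic: "periodic_fun L \<psi>'"
  using periodic_fun_deriv[OF \<psi>_periodic \<psi>_deriv] .

lemma b\<psi>_integrable: "(\<lambda>x. b x * \<psi> x) integrable_on {u..v}"
  using b_continuous \<psi>_continuous by (intro continuous_on_UNIV_integrable_on_Icc continuous_intros)

lemma eigenvalue_integral_identity:
  "\<mu> * integral {0..L} \<psi> = - integral {0..L} (\<lambda>x. b x * \<psi> x)"
proof -
  have "((\<lambda>x. - \<psi>'' x + 2 * lam * \<psi>' x - b x * \<psi> x) has_integral
          (- 0 + 2 * lam * 0 - integral {0..L} (\<lambda>x. b x * \<psi> x))) {0..L}"
    using periodic_fun_deriv_has_integral_zero[OF \<psi>'_periodic _ \<psi>'_deriv]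
      periodic_fun_deriv_has_integral_zero[OF \<psi>_periodic _ \<psi>_deriv] period_pos b\<psi>_integrable
    by (intro has_integral_diff has_integral_add has_integral_neg has_integral_mult_right) auto
  moreover have "((\<lambda>x. \<mu> * \<psi> x) has_integral (\<mu> * integral {0..L} \<psi>)) {0..L}"
    using continuous_on_UNIV_integrable_on_Icc[OF \<psi>_continuous] by (intro has_integral_mult_right) blast
  moreover have "(\<lambda>x. - \<psi>'' x + 2 * lam * \<psi>' x - b x * \<psi> x) = (\<lambda>x. \<mu> * \<psi> x)"
    using eigen_equation by blast
  ultimately have "- 0 + 2 * lam * 0 - integral {0..L} (\<lambda>x. b x * \<psi> x) = \<mu> * integral {0..L} \<psi>"
    using has_integral_unique by metis
  then show ?thesis by simp
qed

lemma \<psi>_attains_max: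
  obtains xM where "xM \<in> {0..L}" "Sup (range \<psi>) = \<psi> xM" "\<And>y. \<psi> y \<le> \<psi> xM"
proof -
  obtain xM where "xM \<in> {0..0+L}" "\<forall>y. \<psi> y \<le> \<psi> xM"
    using periodic_fun_attains_max[OF \<psi>_periodic period_pos \<psi>_continuous] by blast
  moreover from this have "Sup (range \<psi>) = \<psi> xM" by (intro cSup_eq_maximum) auto
  ultimately show thesis using that by auto
qed

lemma Sup_range_\<psi>_pos: "Sup (range \<psi>) > 0"
  using \<psi>_attains_max \<psi>_pos by metis

lemma \<psi>_attains_min:
  obtains xm where "xm \<in> {a..a+L}" "Inf (range \<psi>) = \<psi> xm" "\<And>y. \<psi> xm \<le> \<psi> y"
proof -
  obtain xm where "xm \<in> {a..a+L}" "\<forall>y. \<psi> xm \<le> \<psi> y"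
    using periodic_fun_attains_min[OF \<psi>_periodic period_pos \<psi>_continuous] by blast
  moreover from this have "Inf (range \<psi>) = \<psi> xm" by (intro cInf_eq_minimum) auto
  ultimately show thesis using that by auto
qed

lemma integral_\<psi>_pos: "integral {0..L} \<psi> > 0"
proof -
  obtain xm where min: "\<And>y. \<psi> xm \<le> \<psi> y" using \<psi>_attains_min by metis
  have "0 < L * \<psi> xm" using period_pos \<psi>_pos[of xm] by simp
  also have "\<dots> = integral {0..L} (\<lambda>_. \<psi> xm)" using period_pos by simp
  also have "\<dots> \<le> integral {0..L} \<psi>"
    using min continuous_on_UNIV_integrable_on_Icc[OF \<psi>_continuous] by (intro integral_le) auto
  finally show ?thesis .
qed

lemma eigenvalue_nonpos: "\<mu> \<le> 0"
proof -
  have "integral {0..L} (\<lambda>x. b x * \<psi> x) \<ge> 0"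
    using b_nonneg \<psi>_pos b\<psi>_integrable by (intro integral_nonneg) (simp_all add: less_imp_le)
  then have "\<mu> * integral {0..L} \<psi> \<le> 0" using eigenvalue_integral_identity by linarith
  then show ?thesis using integral_\<psi>_pos by (simp add: mult_le_0_iff)
qed

definition decay_rate :: real where "decay_rate = sqrt (- \<mu>)"

lemma decay_rate_nonneg: "decay_rate \<ge> 0"
  and decay_rate_squared: "decay_rate ^ 2 = - \<mu>"
  using eigenvalue_nonpos by (simp_all add: decay_rate_def)

lemma log_deriv_attains_min:
  obtains x0 where "\<And>y. \<psi>' x0 / \<psi> x0 \<le> \<psi>' y / \<psi> y" and "\<psi>'' x0 * \<psi> x0 = (\<psi>' x0)\<^sup>2"
proof -
  define \<phi> where "\<phi> x = \<psi>' x / \<psi> x" for x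
  have d\<phi>: "(\<phi> has_real_derivative ((\<psi>'' x * \<psi> x - \<psi>' x * \<psi>' x) / (\<psi> x * \<psi> x))) (at x)" for x
    unfolding \<phi>_def[abs_def] using \<psi>_deriv \<psi>'_deriv \<psi>_pos[of x]
    by (auto intro!: derivative_eq_intros simp: power2_eq_square)
  have "periodic_fun L \<phi>"
    using \<psi>_periodic \<psi>'_periodic unfolding periodic_fun_def \<phi>_def by simp
  then obtain x0 where min: "\<And>y. \<phi> x0 \<le> \<phi> y"
    using periodic_fun_attains_min[OF _ period_pos has_real_derivative_continuous_on[OF d\<phi>]]
    by blast
  then have "(\<psi>'' x0 * \<psi> x0 - \<psi>' x0 * \<psi>' x0) / (\<psi> x0 * \<psi> x0) = 0"
    using DERIV_local_min[OF d\<phi>[of x0], of 1] by auto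
  then have "\<psi>'' x0 * \<psi> x0 = (\<psi>' x0)\<^sup>2" using \<psi>_pos[of x0] by (simp add: power2_eq_square)
  then show thesis using that min unfolding \<phi>_def by blast
qed

lemma log_deriv_ge_at_critical:
  assumes "\<psi>' x < 0" and "\<psi>'' x * \<psi> x = (\<psi>' x)\<^sup>2"
  shows "- decay_rate \<le> \<psi>' x / \<psi> x"
proof -
  have q: "\<psi> x > 0" using \<psi>_pos .
  have "(\<psi>' x)\<^sup>2 = (2 * lam * \<psi>' x - b x * \<psi> x - \<mu> * \<psi> x) * \<psi> x"
    using assms(2) eigen_equation[of x] by (simp add: algebra_simps)
  also have "\<dots> \<le> decay_rate ^ 2 * (\<psi> x)\<^sup>2"
  proof -
    have "2 * lam * \<psi>' x * \<psi> x \<le> 0"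
      using assms(1) drift_nonneg q by (simp add: mult_nonneg_nonpos mult_nonpos_nonneg)
    moreover have "b x * \<psi> x * \<psi> x \<ge> 0" using b_nonneg q by simp
    ultimately show ?thesis using decay_rate_squared by (simp add: algebra_simps power2_eq_square)
  qed
  finally have "(\<psi>' x / \<psi> x)\<^sup>2 \<le> decay_rate ^ 2" using q by (simp add: field_simps)
  then have "\<bar>\<psi>' x / \<psi> x\<bar> \<le> decay_rate"
    using decay_rate_nonneg by (metis abs_of_nonneg real_sqrt_abs real_sqrt_le_mono)
  then show ?thesis by linarith
qed

lemma log_deriv_ge: "- decay_rate \<le> \<psi>' x / \<psi> x"
proof -
  obtain x0 where min: "\<And>y. \<psi>' x0 / \<psi> x0 \<le> \<psi>' y / \<psi> y" and crit: "\<psi>'' x0 * \<psi> x0 = (\<psi>' x0)\<^sup>2"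
    using log_deriv_attains_min by blast
  have "- decay_rate \<le> \<psi>' x0 / \<psi> x0"
  proof (cases "\<psi>' x0 < 0")
    case True
    then show ?thesis using log_deriv_ge_at_critical crit by blast
  next
    case False
    then have "\<psi>' x0 / \<psi> x0 \<ge> 0" using \<psi>_pos[of x0] by simp
    then show ?thesis using decay_rate_nonneg by linarith
  qed
  then show ?thesis using min[of x] by linarith
qed

lemma decay_bound:
  assumes "x \<le> y"
  shows "\<psi> x * exp (- decay_rate * (y - x)) \<le> \<psi> y"
proof -
  have "ln (\<psi> x) + decay_rate * x \<le> ln (\<psi> y) + decay_rate * y"
  proof (rule DERIV_nonneg_imp_nondecreasing[OF assms])
    fix t
    have "((\<lambda>t. ln (\<psi> t) + decay_rate * t) has_real_derivative (\<psi>' t / \<psi> t + decay_rate)) (at t)"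
      using \<psi>_deriv \<psi>_pos by (auto intro!: derivative_eq_intros simp: field_simps)
    then show "\<exists>d. ((\<lambda>t. ln (\<psi> t) + decay_rate * t) has_real_derivative d) (at t) \<and> d \<ge> 0"
      using log_deriv_ge[of t] by force
  qed
  then have "exp (ln (\<psi> x) - decay_rate * (y - x)) \<le> exp (ln (\<psi> y))"
    by (simp add: algebra_simps)
  then show ?thesis using \<psi>_pos[of x] \<psi>_pos[of y] by (simp add: exp_diff exp_minus divide_inverse)
qed

lemma sup_inf_ratio_le_exp: "Sup (range \<psi>) / Inf (range \<psi>) \<le> exp (decay_rate * L)"
proof -
  obtain xM where xM: "Sup (range \<psi>) = \<psi> xM" using \<psi>_attains_max by metis
  obtain xm where xm: "xm \<in> {xM..xM+L}" "Inf (range \<psi>) = \<psi> xm" using \<psi>_attains_min by metis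
  have "\<psi> xM * exp (- decay_rate * L) \<le> \<psi> xM * exp (- decay_rate * (xm - xM))"
    using xm(1) decay_rate_nonneg \<psi>_pos[of xM] by (auto intro!: mult_left_mono)
  also have "\<dots> \<le> \<psi> xm" using decay_bound xm(1) by simp
  finally show ?thesis using xM xm \<psi>_pos[of xm] by (simp add: exp_minus field_simps)
qed

lemma integral_\<psi>_ge:
  assumes "decay_rate > 0"
  shows "Sup (range \<psi>) * (1 - exp (- decay_rate * L)) / decay_rate \<le> integral {0..L} \<psi>"
proof -
  obtain xM where xM: "xM \<in> {0..L}" "Sup (range \<psi>) = \<psi> xM" using \<psi>_attains_max by metis
  define G where "G y = - \<psi> xM / decay_rate * exp (- decay_rate * (y - xM))" for y
  have "((\<lambda>y. \<psi> xM * exp (- decay_rate * (y - xM))) has_integral (G (xM + L) - G xM)) {xM..xM+L}"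
    using period_pos assms unfolding G_def
    by (intro fundamental_theorem_of_calculus)
      (auto intro!: derivative_eq_intros simp: has_real_derivative_iff_has_vector_derivative[symmetric])
  moreover have "G (xM + L) - G xM = \<psi> xM * (1 - exp (- decay_rate * L)) / decay_rate"
    unfolding G_def using assms by (simp add: field_simps)
  ultimately have "\<psi> xM * (1 - exp (- decay_rate * L)) / decay_rate \<le> integral {xM..xM+L} \<psi>"
    using decay_bound continuous_on_UNIV_integrable_on_Icc[OF \<psi>_continuous]
    by (intro has_integral_le[OF _ integrable_integral]) auto
  also have "\<dots> = integral {0..L} \<psi>"
    using periodic_fun_integral_shift[OF \<psi>_periodic \<psi>_continuous xM(1)] .
  finally show ?thesis using xM(2) by simp
qed

lemma integral_b\<psi>_le: "integral {0..L} (\<lambda>x. b x * \<psi> x) \<le> Sup (range \<psi>) * integral {0..L} b"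
proof -
  obtain xM where xM: "Sup (range \<psi>) = \<psi> xM" "\<And>y. \<psi> y \<le> \<psi> xM" using \<psi>_attains_max by metis
  have "integral {0..L} (\<lambda>x. b x * \<psi> x) \<le> integral {0..L} (\<lambda>x. \<psi> xM * b x)"
    using b\<psi>_integrable continuous_on_UNIV_integrable_on_Icc[OF b_continuous] xM(2) b_nonneg
    by (intro integral_le integrable_on_mult_right) (auto simp: mult.commute intro: mult_right_mono)
  then show ?thesis using xM(1) by simp
qed

lemma decay_rate_le: "decay_rate \<le> 1 / L + 2 * integral {0..L} b"
proof -
  have b_integral_nonneg: "integral {0..L} b \<ge> 0"
    using b_nonneg continuous_on_UNIV_integrable_on_Icc[OF b_continuous] by (intro integral_nonneg) auto
  show ?thesis
  proof (cases "decay_rate * L \<le> 1")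
    case True
    then have "decay_rate \<le> 1 / L" using period_pos by (simp add: field_simps)
    then show ?thesis using b_integral_nonneg by linarith
  next
    case False
    define s where "s = decay_rate"
    define M where "M = Sup (range \<psi>)"
    have s_pos: "s > 0" using False decay_rate_nonneg s_def by (cases "s = 0") auto
    have M_pos: "M > 0" using Sup_range_\<psi>_pos M_def by simp
    have "exp (- s * L) \<le> exp (-1)" using False s_def by simp
    also have "exp (-1) \<le> (1 / 2 :: real)"
      using exp_ge_add_one_self[of 1] by (simp add: exp_minus field_simps)
    finally have "M / s * (1 / 2) \<le> M / s * (1 - exp (- s * L))"
      using M_pos s_pos by (intro mult_left_mono) auto
    also have "\<dots> \<le> integral {0..L} \<psi>" using integral_\<psi>_ge s_pos unfolding s_def M_def by simp
    finally have "s ^ 2 * (M / s * (1 / 2)) \<le> s ^ 2 * integral {0..L} \<psi>"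
      by (intro mult_left_mono) simp_all
    also have "\<dots> = integral {0..L} (\<lambda>x. b x * \<psi> x)"
      using eigenvalue_integral_identity decay_rate_squared s_def by simp
    also have "\<dots> \<le> M * integral {0..L} b" using integral_b\<psi>_le M_def by simp
    finally have "M * (s / 2) \<le> M * integral {0..L} b"
      using s_pos by (simp add: power2_eq_square mult.commute)
    then have "s \<le> 2 * integral {0..L} b" using M_pos by simp
    moreover have "1 / L > 0" using period_pos by simp
    ultimately show ?thesis using s_def by linarith
  qed
qed

theorem sup_inf_ratio_le: "Sup (range \<psi>) / Inf (range \<psi>) \<le> exp (1 + 2 * L * integral {0..L} b)"
proof -
  have "decay_rate * L \<le> (1 / L + 2 * integral {0..L} b) * L"
    using decay_rate_le period_pos by (intro mult_right_mono) auto
  also have "\<dots> = 1 + 2 * L * integral {0..L} b"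
    using period_pos by (simp add: field_simps)
  finally show ?thesis using sup_inf_ratio_le_exp by (meson exp_le_cancel_iff order_trans)
qed

end

theorem mainTheorem17:
  fixes L \<alpha> :: real
  assumes "L > 0" and "\<alpha> > 0"
  shows "\<exists>F>0. \<forall>lam\<ge>0. \<forall>b\<in>Lambda_class L \<alpha>. \<forall>\<mu> \<psi>.
           principal_eigenfunction L lam b \<mu> \<psi> \<longrightarrow>
           Sup (range \<psi>) / Inf (range \<psi>) \<le> F"
proof (intro exI[of _ "exp (1 + 2 * L * (\<alpha> * L))"] conjI allI impI ballI)
  fix lam \<mu> :: real and b \<psi> :: "real \<Rightarrow> real"
  assume lam: "lam \<ge> 0" and "b \<in> Lambda_class L \<alpha>" and "principal_eigenfunction L lam b \<mu> \<psi>"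
  then obtain b' \<psi>' \<psi>'' where b_deriv: "\<forall>x. (b has_real_derivative b' x) (at x)"
    and b_integral: "integral {0..L} b = \<alpha> * L"
    and "\<forall>x. b x \<ge> 0" "\<forall>x. \<psi> x > 0" "periodic_fun L \<psi>"
    and "\<forall>x. (\<psi> has_real_derivative \<psi>' x) (at x)" "\<forall>x. (\<psi>' has_real_derivative \<psi>'' x) (at x)"
    and "\<forall>x. - \<psi>'' x + 2 * lam * \<psi>' x - b x * \<psi> x = \<mu> * \<psi> x"
    unfolding Lambda_class_def C1_real_def principal_eigenfunction_def by blast
  moreover have "continuous_on UNIV b" using b_deriv has_real_derivative_continuous_on by blast
  ultimately interpret periodic_eigenfunction L lam \<mu> b \<psi> \<psi>' \<psi>''
    using \<open>L > 0\<close> lam by unfold_locales auto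
  show "Sup (range \<psi>) / Inf (range \<psi>) \<le> exp (1 + 2 * L * (\<alpha> * L))"
    using sup_inf_ratio_le b_integral by simp
qed simp

end
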